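(* Let the sequences be generated by Algorithm iMBA and suppose Assumptions 2 and 3 hold. Then $\omega(x^0)$ is nonempty and compact, and $\lim_{k\to\infty}\|x^k-\overline x^k\|=0$ and $\lim_{k\to\infty}\|x^{k+1}-\overline x^k\|=0$.
   Context: Problem (P): $\min_{x\in\mathbb{R}^n}F(x):=g_0(x)+\delta_{\mathbb{R}^m_-}(g(x))+\phi(x)$, where $g=(g_1,\dots,g_m)^\top$ and $\delta_{\mathbb{R}^m_-}$ is the indicator of the nonpositive orthant. Assumption 1 (standing): (i) $g_0:\mathbb{R}^n\to(-\infty,\infty]$ is locally Lipschitz and upper-$\mathcal C^2$ at every point of an open convex set $\mathcal O\supset\Gamma:=\{x:g(x)\in\mathbb{R}^m_-\}\neq\emptyset$, and each $g_i:\mathbb{R}^n\to\mathbb{R}$, $i\in[m]$, is locally Lipschitz and upper-$\mathcal C^2$ at every point of $\mathbb{R}^n$; (ii) $\phi:\mathbb{R}^n\to\mathbb{R}$ is convex and $F$ is bounded below on $\Gamma$. $\partial$ denotes the limiting subdifferential; $\partial g(x):=\{V\in\mathbb{R}^{n\times m}: V_i\in\partial g_i(x)\ \forall i\}$. Define $G(x,s,V,L):=g(s)+V^\top(x-s)+\tfrac12\|x-s\|^2L$. Algorithm iMBA (parameters $0<\mu_{\min}\le\mu_{\max}$, $0<L_{\min}\le L_{\max}$, $M,\beta_C,\beta_S,\alpha>0$, $\tau>1$, $x^0\in\Gamma$): at iteration $k$ choose $\xi^k\in\partial g_0(x^k)$, $V^k\in\partial g(x^k)$, $\mu_{k,0}\in[\mu_{\min},\mu_{\max}]$,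 $L^{k,0}\in[L_{\min},L_{\max}]^m$; for $j=0,1,\dots$ choose self-adjoint $\mathcal Q_{k,j}$ with $\mu_{k,j}\mathcal I\preceq\mathcal Q_{k,j}\preceq(\mu_{k,j}+M)\mathcal I$, let $F_{k,j}(x):=g_0(x^k)+\langle\xi^k,x-x^k\rangle+\frac12\langle x-x^k,\mathcal Q_{k,j}(x-x^k)\rangle+\phi(x)$, $\Gamma_{k,j}:=\{x:G(x,x^k,V^k,L^{k,j})\in\mathbb{R}^m_-\}$, $\overline x^{k,j}$ the unique minimizer of $F_{k,j}$ on $\Gamma_{k,j}$, and compute $y^{k,j}$, $v^{k,j}\in\partial\phi(y^{k,j})$, $\lambda^{k,j}\in\mathbb{R}^m_+$ with $F_{k,j}(y^{k,j})\le F_{k,j}(x^k)$, $(-\langle\lambda^{k,j},G(y^{k,j},x^k,V^k,L^{k,j})\rangle)_++\|[G(y^{k,j},x^k,V^k,L^{k,j})]_+\|_\infty\le\frac{\beta_C}2\|y^{k,j}-x^k\|^2$ and $\|\xi^k+\mathcal Q_{k,j}(y^{k,j}-x^k)+v^{k,j}+V^k\lambda^{k,j}+\langle L^{k,j},\lambda^{k,j}\rangle(y^{k,j}-x^k)\|\le\beta_S\|y^{k,j}-x^k\|$. If $g(y^{k,j})\in\mathbb{R}^m_-$ and $F(y^{k,j})\le F(x^k)-\frac\alpha2\|y^{k,j}-x^k\|^2$, accept ($j_k:=j$); else if $g(y^{k,j})\notin\mathbb{R}^m_-$ set $L^{k,j+1}=\tau L^{k,j}$, $\mu_{k,j+1}=\mu_{k,j}$;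 else $L^{k,j+1}=L^{k,j}$, $\mu_{k,j+1}=\tau\mu_{k,j}$. Then $x^{k+1}:=y^{k,j_k}$, $(\mu_k,\mathcal Q_k,L^k,v^{k+1},\lambda^{k+1}):=(\mu_{k,j_k},\mathcal Q_{k,j_k},L^{k,j_k},v^{k,j_k},\lambda^{k,j_k})$, $\overline x^k:=\overline x^{k,j_k}$. Assumption 2: for each $k,j$, the multifunction $x\mapsto G(x,x^k,V^k,L^{k,j})-\mathbb{R}^m_-$ is metrically subregular at $(\overline x^{k,j},0)$. Assumption 3: $\{x^k\}$ is bounded; $\omega(x^0)$ denotes its set of cluster points. *)

theory Defs
  imports "HOL-Analysis.Analysis"
begin

definition nonpos_orth :: "(real^'m) set" where
  "nonpos_orth = {w. \<forall>i. w $ i \<le> 0}"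

definition frechet_subdiff :: "('a::euclidean_space \<Rightarrow> real) \<Rightarrow> 'a \<Rightarrow> 'a set" where
  "frechet_subdiff f x =
     {v. Liminf (at x) (\<lambda>z. ereal ((f z - f x - inner v (z - x)) / norm (z - x))) \<ge> 0}"

definition limiting_subdiff :: "('a::euclidean_space \<Rightarrow> real) \<Rightarrow> 'a \<Rightarrow> 'a set" where
  "limiting_subdiff f x =
     {v. \<exists>xs vs. xs \<longlonglongrightarrow> x \<and> (\<lambda>k. f (xs k)) \<longlonglongrightarrow> f x \<and>
                 (\<forall>k. vs k \<in> frechet_subdiff f (xs k)) \<and> vs \<longlonglongrightarrow> v}"

text \<open>Generalized Jacobian-type set: matrices (stored by columns V $ i) whose i-th column
  is a limiting subgradient of g_i.\<close>
definition jac_subdiff :: "('a::euclidean_space \<Rightarrow> real^'m) \<Rightarrow> 'a \<Rightarrow> ('a^'m) set" where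
  "jac_subdiff g x = {V. \<forall>i. V $ i \<in> limiting_subdiff (\<lambda>z. g z $ i) x}"

definition locally_lipschitz_at :: "('a::metric_space \<Rightarrow> real) \<Rightarrow> 'a \<Rightarrow> bool" where
  "locally_lipschitz_at f x \<longleftrightarrow> (\<exists>U C. open U \<and> x \<in> U \<and> C-lipschitz_on U f)"

text \<open>Upper-C^2 at x (Rockafellar--Wets Def. 10.29, with min instead of max): near x, f is
  the pointwise minimum over a compact parameter set T (in the parameter type 'c) of C^2
  functions whose values, gradients and Hessians depend jointly continuously on (t,z).\<close>
definition upper_C2_at :: "'c::topological_space itself \<Rightarrow> ('a::euclidean_space \<Rightarrow> real) \<Rightarrow> 'a \<Rightarrow> bool" where
  "upper_C2_at _ f x \<longleftrightarrow>
     (\<exists>(U::'a set) (T::'c set) (h::'c \<Rightarrow> 'a \<Rightarrow> real) (Dh::'c \<Rightarrow> 'a \<Rightarrow> 'a) (D2h::'c \<Rightarrow> 'a \<Rightarrow> 'a \<Rightarrow>\<^sub>L 'a).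
        open U \<and> x \<in> U \<and> compact T \<and> T \<noteq> {} \<and>
        (\<forall>t\<in>T. \<forall>z\<in>U. (h t has_derivative (\<lambda>u. inner (Dh t z) u)) (at z) \<and>
                        (Dh t has_derivative blinfun_apply (D2h t z)) (at z)) \<and>
        continuous_on (T \<times> U) (\<lambda>(t,z). h t z) \<and>
        continuous_on (T \<times> U) (\<lambda>(t,z). Dh t z) \<and>
        continuous_on (T \<times> U) (\<lambda>(t,z). D2h t z) \<and>
        (\<forall>z\<in>U. (\<exists>t\<in>T. f z = h t z) \<and> (\<forall>t\<in>T. f z \<le> h t z)))"

definition metric_subregular :: "('a::metric_space \<Rightarrow> 'b::metric_space set) \<Rightarrow> 'a \<Rightarrow> 'b \<Rightarrow> bool" where
  "metric_subregular S x y \<longleftrightarrow> y \<in> S x \<and>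
     (\<exists>\<kappa>>0. \<exists>\<epsilon>>0. \<forall>u\<in>ball x \<epsilon>. infdist u {w. y \<in> S w} \<le> \<kappa> * infdist y (S u))"

definition Gmap :: "('a::euclidean_space \<Rightarrow> real^'m) \<Rightarrow> 'a \<Rightarrow> 'a^'m \<Rightarrow> real^'m \<Rightarrow> 'a \<Rightarrow> real^'m" where
  "Gmap g s V L z = g s + (\<chi> i. inner (V $ i) (z - s)) + ((norm (z - s))\<^sup>2 / 2) *\<^sub>R L"

definition iMBA_F :: "('a \<Rightarrow> real) \<Rightarrow> ('a \<Rightarrow> real^'m) \<Rightarrow> ('a \<Rightarrow> real) \<Rightarrow> 'a \<Rightarrow> ereal" where
  "iMBA_F g0 g \<phi> z = (if g z \<in> nonpos_orth then ereal (g0 z + \<phi> z) else \<infinity>)"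

definition posinf_norm :: "real^'m \<Rightarrow> real" where
  "posinf_norm w = Max (range (\<lambda>i. max (w $ i) 0))"

definition cluster_points :: "(nat \<Rightarrow> 'a::topological_space) \<Rightarrow> 'a set" where
  "cluster_points s = {z. \<exists>r. strict_mono r \<and> (s \<circ> r) \<longlonglongrightarrow> z}"

end

theory Submission
  imports Defs
begin

text \<open>Each accepted step decreases \<open>F\<close> by at least \<open>\<alpha>/2 \<parallel>x(k+1) - x(k)\<parallel>\<^sup>2\<close>, and \<open>F\<close> is
  bounded below on the feasible set, so the steps are square summable and tend to zero. The accepted
  trial point \<open>x(k+1)\<close> lies within a fixed multiple of \<open>\<parallel>x(k+1) - x(k)\<parallel>\<close> of the exact subproblem
  solution \<open>xbar(k)\<close>: strong convexity of the subproblem Lagrangian, together with the residual and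
  complementarity bounds of the inexactness criterion, bounds the model gap between the two points
  from below, while the uniform strong convexity of the linearized constraints makes a convex
  combination of them feasible, which bounds the gap from above.\<close>

definition coercive_selfadjoint :: "real \<Rightarrow> ('a::real_inner \<Rightarrow> 'a) \<Rightarrow> bool" where
  "coercive_selfadjoint \<mu> Q \<longleftrightarrow> linear Q \<and> (\<forall>u w. inner (Q u) w = inner u (Q w)) \<and>
     (\<forall>u. \<mu> * (norm u)\<^sup>2 \<le> inner u (Q u))"

definition prox_model ::
    "real \<Rightarrow> 'a::real_inner \<Rightarrow> 'a \<Rightarrow> ('a \<Rightarrow> 'a) \<Rightarrow> ('a \<Rightarrow> real) \<Rightarrow> 'a \<Rightarrow> real" where
  "prox_model c a \<xi> Q \<phi> z = c + inner \<xi> (z - a) + inner (z - a) (Q (z - a)) / 2 + \<phi> z"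

text \<open>A subgradient at \<open>y\<close> of the subproblem Lagrangian
  \<open>z \<mapsto> prox_model c a \<xi> Q \<phi> z + \<langle>lam, Gmap g a V L z\<rangle>\<close>, built from \<open>v \<in> \<partial>\<phi>(y)\<close>.\<close>
definition model_kkt_residual ::
    "'a::euclidean_space \<Rightarrow> 'a \<Rightarrow> ('a \<Rightarrow> 'a) \<Rightarrow> 'a^'m \<Rightarrow> real^'m \<Rightarrow> real^'m \<Rightarrow> 'a \<Rightarrow> 'a \<Rightarrow> 'a" where
  "model_kkt_residual a \<xi> Q V L lam v y =
     \<xi> + Q (y - a) + v + (\<Sum>i\<in>UNIV. lam $ i *\<^sub>R V $ i) + inner L lam *\<^sub>R (y - a)"

lemma Gmap_nth:
  "Gmap g s V L z $ i = g s $ i + inner (V $ i) (z - s) + (norm (z - s))\<^sup>2 / 2 * L $ i"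
  by (simp add: Gmap_def)

lemma posinf_norm_ge: "w $ i \<le> posinf_norm (w::real^'m)"
  and posinf_norm_nonneg: "0 \<le> posinf_norm w"
proof -
  have "max (w $ j) 0 \<le> posinf_norm w" for j
    unfolding posinf_norm_def by (rule Max_ge) auto
  then show "w $ i \<le> posinf_norm w" "0 \<le> posinf_norm w"
    by (simp_all add: max.bounded_iff)
qed

lemma inner_selfadjoint_add:
  fixes Q :: "'a::real_inner \<Rightarrow> 'a"
  assumes "linear Q" "\<forall>u w. inner (Q u) w = inner u (Q w)"
  shows "inner (u + h) (Q (u + h)) = inner u (Q u) + 2 * inner (Q u) h + inner h (Q h)"
proof -
  have "Q (u + h) = Q u + Q h" using assms(1) by (simp add: linear_add)
  moreover have "inner u (Q h) = inner (Q u) h" using assms(2) by simp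
  ultimately show ?thesis by (simp add: inner_add inner_commute)
qed

lemma convex_on_quadratic_form:
  fixes Q :: "'a::real_inner \<Rightarrow> 'a"
  assumes "linear Q" "\<forall>u w. inner (Q u) w = inner u (Q w)" "\<forall>u. 0 \<le> inner u (Q u)"
  shows "convex_on UNIV (\<lambda>u. inner u (Q u))"
proof (rule convex_onI)
  fix t :: real and A B :: 'a
  assume t: "0 < t" "t < 1"
  have comb: "(1 - t) *\<^sub>R A + t *\<^sub>R B = A + t *\<^sub>R (B - A)" by (simp add: algebra_simps)
  have at_comb: "inner (A + t *\<^sub>R (B - A)) (Q (A + t *\<^sub>R (B - A)))
      = inner A (Q A) + 2 * t * inner (Q A) (B - A) + t\<^sup>2 * inner (B - A) (Q (B - A))"
    using inner_selfadjoint_add[OF assms(1,2), of A "t *\<^sub>R (B - A)"] assms(1)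
    by (simp add: linear_scale power2_eq_square)
  have at_B: "inner B (Q B) = inner A (Q A) + 2 * inner (Q A) (B - A) + inner (B - A) (Q (B - A))"
    using inner_selfadjoint_add[OF assms(1,2), of A "B - A"] by simp
  have "0 \<le> (t - t\<^sup>2) * inner (B - A) (Q (B - A))"
    using assms(3) t by (intro mult_nonneg_nonneg) (auto simp: power2_eq_square)
  then show "inner ((1 - t) *\<^sub>R A + t *\<^sub>R B) (Q ((1 - t) *\<^sub>R A + t *\<^sub>R B))
      \<le> (1 - t) * inner A (Q A) + t * inner B (Q B)"
    unfolding comb at_comb at_B by (simp add: algebra_simps power2_eq_square)
qed simp

lemma convex_on_prox_model:
  fixes Q :: "'a::real_inner \<Rightarrow> 'a"
  assumes Q: "coercive_selfadjoint \<mu> Q" and "0 \<le> \<mu>" and \<phi>: "convex_on UNIV \<phi>"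
  shows "convex_on UNIV (prox_model c a \<xi> Q \<phi>)"
proof (rule convex_onI)
  fix t :: real and y z :: 'a
  assume t: "0 < t" "t < 1"
  define p where "p = (1 - t) *\<^sub>R y + t *\<^sub>R z"
  have pa: "p - a = (1 - t) *\<^sub>R (y - a) + t *\<^sub>R (z - a)" by (simp add: p_def algebra_simps)
  have "\<forall>u. 0 \<le> inner u (Q u)"
    using Q \<open>0 \<le> \<mu>\<close> unfolding coercive_selfadjoint_def by (meson order_trans zero_le_mult_iff zero_le_power2)
  then have "inner (p - a) (Q (p - a)) \<le> (1 - t) * inner (y - a) (Q (y - a)) + t * inner (z - a) (Q (z - a))"
    unfolding pa using Q t by (intro convex_onD[OF convex_on_quadratic_form]) (auto simp: coercive_selfadjoint_def)
  moreover have "\<phi> p \<le> (1 - t) * \<phi> y + t * \<phi> z"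
    unfolding p_def using convex_onD[OF \<phi>, of t y z] t by simp
  moreover have "inner \<xi> (p - a) = (1 - t) * inner \<xi> (y - a) + t * inner \<xi> (z - a)"
    unfolding pa by (simp add: inner_add_right)
  ultimately have "prox_model c a \<xi> Q \<phi> p \<le> c + ((1 - t) * inner \<xi> (y - a) + t * inner \<xi> (z - a))
        + ((1 - t) * inner (y - a) (Q (y - a)) + t * inner (z - a) (Q (z - a))) / 2
        + ((1 - t) * \<phi> y + t * \<phi> z)"
    unfolding prox_model_def by (intro add_mono divide_right_mono) auto
  also have "\<dots> = (1 - t) * prox_model c a \<xi> Q \<phi> y + t * prox_model c a \<xi> Q \<phi> z"
    by (simp add: prox_model_def field_simps del: inner_diff_left inner_diff_right)
  finally show "prox_model c a \<xi> Q \<phi> p \<le> (1 - t) * prox_model c a \<xi> Q \<phi> y + t * prox_model c a \<xi> Q \<phi> z" .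
qed simp

lemma norm_convex_comb_sq:
  fixes A B :: "'a::real_inner"
  shows "(norm ((1 - t) *\<^sub>R A + t *\<^sub>R B))\<^sup>2
    = (1 - t) * (norm A)\<^sup>2 + t * (norm B)\<^sup>2 - t * (1 - t) * (norm (B - A))\<^sup>2"
  unfolding power2_norm_eq_inner by (simp add: inner_add inner_diff inner_commute algebra_simps)

lemma Gmap_convex_comb:
  "Gmap g a V L ((1 - t) *\<^sub>R y + t *\<^sub>R z) $ i
    = (1 - t) * Gmap g a V L y $ i + t * Gmap g a V L z $ i - L $ i / 2 * (t * (1 - t) * (norm (z - y))\<^sup>2)"
proof -
  have pa: "(1 - t) *\<^sub>R y + t *\<^sub>R z - a = (1 - t) *\<^sub>R (y - a) + t *\<^sub>R (z - a)"
    by (simp add: algebra_simps)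
  show ?thesis
    unfolding Gmap_nth pa norm_convex_comb_sq
    by (simp add: inner_add_right) (simp add: field_simps del: inner_diff_left inner_diff_right)
qed

lemma lagrangian_lower_bound:
  fixes a y z v \<xi> :: "'a::euclidean_space" and Q :: "'a \<Rightarrow> 'a" and g :: "'a \<Rightarrow> real^'m"
    and V :: "'a^'m" and L lam :: "real^'m" and \<phi> :: "'a \<Rightarrow> real"
  assumes Q: "coercive_selfadjoint \<mu> Q" and L: "\<forall>i. 0 \<le> L $ i" and lam: "\<forall>i. 0 \<le> lam $ i"
    and v: "\<phi> y + inner v (z - y) \<le> \<phi> z"
  shows "prox_model c a \<xi> Q \<phi> y + inner lam (Gmap g a V L y)
           + inner (model_kkt_residual a \<xi> Q V L lam v y) (z - y) + \<mu> / 2 * (norm (z - y))\<^sup>2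
         \<le> prox_model c a \<xi> Q \<phi> z + inner lam (Gmap g a V L z)"
proof -
  define u where "u = y - a"
  define h where "h = z - y"
  have za: "z - a = u + h" by (simp add: u_def h_def)
  have Qz: "inner (z - a) (Q (z - a)) = inner u (Q u) + 2 * inner (Q u) h + inner h (Q h)"
    unfolding za using Q by (intro inner_selfadjoint_add) (auto simp: coercive_selfadjoint_def)
  have Qh: "\<mu> * (norm h)\<^sup>2 \<le> inner h (Q h)" using Q by (simp add: coercive_selfadjoint_def)
  have Gdiff: "Gmap g a V L z $ i - Gmap g a V L y $ i
      = inner (V $ i) h + L $ i * inner u h + L $ i * (norm h)\<^sup>2 / 2" for i
    unfolding Gmap_nth za
    by (simp add: power2_norm_eq_inner inner_add algebra_simps inner_commute flip: u_def)
  have "inner lam (Gmap g a V L z) - inner lam (Gmap g a V L y)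
      = (\<Sum>i\<in>UNIV. lam $ i * (Gmap g a V L z $ i - Gmap g a V L y $ i))"
    by (simp add: inner_vec_def sum_subtractf algebra_simps)
  also have "\<dots> = (\<Sum>i\<in>UNIV. lam $ i * inner (V $ i) h + (L $ i * lam $ i) * inner u h
                     + (lam $ i * L $ i) * (norm h)\<^sup>2 / 2)"
    by (simp add: Gdiff algebra_simps)
  also have "\<dots> = (\<Sum>i\<in>UNIV. lam $ i * inner (V $ i) h) + inner L lam * inner u h
        + (\<Sum>i\<in>UNIV. lam $ i * L $ i) * (norm h)\<^sup>2 / 2"
    by (simp add: sum.distrib inner_vec_def sum_distrib_right sum_divide_distrib)
  finally have lamG: "inner lam (Gmap g a V L z) - inner lam (Gmap g a V L y)
      = (\<Sum>i\<in>UNIV. lam $ i * inner (V $ i) h) + inner L lam * inner u h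
        + (\<Sum>i\<in>UNIV. lam $ i * L $ i) * (norm h)\<^sup>2 / 2" .
  have "0 \<le> (\<Sum>i\<in>UNIV. lam $ i * L $ i) * (norm h)\<^sup>2 / 2"
    using lam L by (intro divide_nonneg_nonneg mult_nonneg_nonneg sum_nonneg) auto
  moreover have "inner (model_kkt_residual a \<xi> Q V L lam v y) (z - y)
      = inner \<xi> h + inner (Q u) h + inner v h + (\<Sum>i\<in>UNIV. lam $ i * inner (V $ i) h)
        + inner L lam * inner u h"
    by (simp add: model_kkt_residual_def inner_add_left inner_sum_left u_def h_def)
  moreover have "inner \<xi> (z - a) = inner \<xi> u + inner \<xi> h" by (simp add: za inner_add)
  moreover have "\<mu> / 2 * (norm h)\<^sup>2 = \<mu> * (norm h)\<^sup>2 / 2" by simp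
  ultimately show ?thesis
    using v lamG Qz Qh unfolding prox_model_def u_def[symmetric] h_def[symmetric] by linarith
qed

text \<open>Every component of \<open>Gmap g a V L\<close> is \<open>Lmin\<close>-strongly convex, so moving \<open>y\<close> towards \<open>xb\<close>
  restores feasibility strictly before \<open>xb\<close> is reached; convexity of \<open>P\<close> then compares the values.\<close>
lemma constrained_minimizer_le_near_feasible:
  fixes a y xb :: "'a::euclidean_space" and g :: "'a \<Rightarrow> real^'m"
    and V :: "'a^'m" and L :: "real^'m" and P :: "'a \<Rightarrow> real"
  defines "G \<equiv> Gmap g a V L"
  assumes P_convex: "convex_on UNIV P" and L: "0 < Lmin" "\<forall>i. Lmin \<le> L $ i"
    and y: "\<forall>i. G y $ i \<le> \<epsilon>" "0 \<le> \<epsilon>" and far: "2 * \<epsilon> < Lmin * (norm (xb - y))\<^sup>2"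
    and xb: "G xb \<in> nonpos_orth" "\<forall>z. G z \<in> nonpos_orth \<longrightarrow> P xb \<le> P z"
  shows "P xb \<le> P y"
proof -
  define r where "r = norm (xb - y)"
  define t where "t = 2 * \<epsilon> / (Lmin * r\<^sup>2)"
  have "0 < Lmin * r\<^sup>2" using far y(2) by (simp add: r_def)
  then have r: "0 < r\<^sup>2" using L(1) by (simp add: zero_less_mult_iff)
  have t: "0 \<le> t" "t < 1"
    using L(1) y(2) r far by (simp_all add: t_def r_def divide_less_eq)
  have tr: "Lmin * t * r\<^sup>2 = 2 * \<epsilon>" using r L(1) by (simp add: t_def)
  define p where "p = (1 - t) *\<^sub>R y + t *\<^sub>R xb"
  have "G p $ i \<le> 0" for i
  proof -
    have "Lmin / 2 * (t * (1 - t) * r\<^sup>2) \<le> L $ i / 2 * (t * (1 - t) * r\<^sup>2)"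
      using L t by (intro mult_right_mono) auto
    moreover have "(1 - t) * G y $ i \<le> (1 - t) * \<epsilon>" using y t by (intro mult_left_mono) auto
    moreover have "t * G xb $ i \<le> 0" using xb(1) t by (simp add: nonpos_orth_def mult_nonneg_nonpos)
    moreover have "Lmin / 2 * (t * (1 - t) * r\<^sup>2) = (1 - t) * \<epsilon>" using tr by (simp add: algebra_simps)
    moreover have "G p $ i = (1 - t) * G y $ i + t * G xb $ i - L $ i / 2 * (t * (1 - t) * r\<^sup>2)"
      unfolding G_def p_def r_def by (rule Gmap_convex_comb)
    ultimately show ?thesis by linarith
  qed
  then have "P xb \<le> P p" using xb(2) by (simp add: nonpos_orth_def)
  also have "\<dots> \<le> (1 - t) * P y + t * P xb"
    unfolding p_def using convex_onD[OF P_convex] t by simp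
  finally have "(1 - t) * P xb \<le> (1 - t) * P y" by (simp add: algebra_simps)
  then show ?thesis using t by simp
qed

lemma sq_le_of_quadratic_ineq:
  fixes m r d bC bS :: real
  assumes "0 < m" "0 \<le> r" "0 \<le> d" "0 \<le> bC" "0 \<le> bS"
    and h: "m * r\<^sup>2 \<le> bC * d\<^sup>2 + 2 * bS * d * r"
  shows "r\<^sup>2 \<le> max (16 * bS\<^sup>2 / m\<^sup>2) (2 * bC / m) * d\<^sup>2"
proof (cases "2 * bS * d * r \<le> m * r\<^sup>2 / 2")
  case True
  then have "r\<^sup>2 \<le> 2 * bC / m * d\<^sup>2" using h assms(1) by (simp add: field_simps)
  also have "\<dots> \<le> max (16 * bS\<^sup>2 / m\<^sup>2) (2 * bC / m) * d\<^sup>2" by (intro mult_right_mono) auto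
  finally show ?thesis .
next
  case False
  then have "0 < r" "m * r * r < 4 * bS * d * r"
    using assms by (auto simp: power2_eq_square algebra_simps intro: le_neq_trans)
  then have "r < 4 * bS * d / m" using assms(1) by (simp add: field_simps)
  then have "r\<^sup>2 \<le> (4 * bS * d / m)\<^sup>2" using \<open>0 < r\<close> by (intro power_mono) auto
  also have "\<dots> = 16 * bS\<^sup>2 / m\<^sup>2 * d\<^sup>2" by (simp add: power_divide power_mult_distrib)
  also have "\<dots> \<le> max (16 * bS\<^sup>2 / m\<^sup>2) (2 * bC / m) * d\<^sup>2" by (intro mult_right_mono) auto
  finally show ?thesis .
qed

lemma inexact_solution_model_gap:
  fixes a y xb v \<xi> :: "'a::euclidean_space" and Q :: "'a \<Rightarrow> 'a" and g :: "'a \<Rightarrow> real^'m"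
    and V :: "'a^'m" and L lam :: "real^'m" and \<phi> :: "'a \<Rightarrow> real" and c :: real
  defines "G \<equiv> Gmap g a V L" and "P \<equiv> prox_model c a \<xi> Q \<phi>"
  assumes Q: "coercive_selfadjoint \<mu> Q" and L: "\<forall>i. 0 \<le> L $ i" and lam: "\<forall>i. 0 \<le> lam $ i"
    and v: "\<forall>z. \<phi> y + inner v (z - y) \<le> \<phi> z" and xb: "G xb \<in> nonpos_orth"
    and compl: "- inner lam (G y) \<le> \<epsilon>"
    and resid: "norm (model_kkt_residual a \<xi> Q V L lam v y) \<le> \<beta>S * norm (y - a)"
  shows "P y - \<epsilon> - \<beta>S * norm (y - a) * norm (y - xb) + \<mu> / 2 * (norm (y - xb))\<^sup>2 \<le> P xb"
proof -
  have "inner lam (G xb) \<le> 0"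
    using lam xb unfolding inner_vec_def nonpos_orth_def
    by (intro sum_nonpos) (simp add: mult_nonneg_nonpos)
  moreover have "- (\<beta>S * norm (y - a) * norm (y - xb))
      \<le> inner (model_kkt_residual a \<xi> Q V L lam v y) (xb - y)"
  proof -
    have "\<bar>inner (model_kkt_residual a \<xi> Q V L lam v y) (xb - y)\<bar> \<le> \<beta>S * norm (y - a) * norm (y - xb)"
      using Cauchy_Schwarz_ineq2 mult_right_mono[OF resid norm_ge_zero]
      by (smt (verit) norm_minus_commute)
    then show ?thesis by linarith
  qed
  moreover have "P y + inner lam (G y) + inner (model_kkt_residual a \<xi> Q V L lam v y) (xb - y)
      + \<mu> / 2 * (norm (xb - y))\<^sup>2 \<le> P xb + inner lam (G xb)"
    unfolding P_def G_def using Q L lam v by (intro lagrangian_lower_bound) auto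
  ultimately show ?thesis
    using compl by (simp add: norm_minus_commute)
qed

lemma inexact_solution_near_minimizer:
  fixes a y xb v \<xi> :: "'a::euclidean_space" and Q :: "'a \<Rightarrow> 'a" and g :: "'a \<Rightarrow> real^'m"
    and V :: "'a^'m" and L lam :: "real^'m" and \<phi> :: "'a \<Rightarrow> real" and c :: real
  defines "G \<equiv> Gmap g a V L" and "P \<equiv> prox_model c a \<xi> Q \<phi>"
  assumes Q: "coercive_selfadjoint \<mu> Q" and \<mu>: "0 < \<mu>min" "\<mu>min \<le> \<mu>"
    and L: "0 < Lmin" "\<forall>i. Lmin \<le> L $ i" and \<beta>: "0 \<le> \<beta>C" "0 \<le> \<beta>S"
    and \<phi>: "convex_on UNIV \<phi>" and v: "\<forall>z. \<phi> y + inner v (z - y) \<le> \<phi> z"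
    and xb: "G xb \<in> nonpos_orth" "\<forall>z. G z \<in> nonpos_orth \<longrightarrow> P xb \<le> P z"
    and lam: "\<forall>i. 0 \<le> lam $ i"
    and compl: "max (- inner lam (G y)) 0 + posinf_norm (G y) \<le> \<beta>C / 2 * (norm (y - a))\<^sup>2"
    and resid: "norm (model_kkt_residual a \<xi> Q V L lam v y) \<le> \<beta>S * norm (y - a)"
  shows "(norm (y - xb))\<^sup>2
    \<le> max (\<beta>C / Lmin) (max (16 * \<beta>S\<^sup>2 / \<mu>min\<^sup>2) (2 * \<beta>C / \<mu>min)) * (norm (y - a))\<^sup>2"
proof -
  define d where "d = norm (y - a)"
  define r where "r = norm (y - xb)"
  define \<epsilon> where "\<epsilon> = \<beta>C / 2 * d\<^sup>2"
  have \<epsilon>: "0 \<le> \<epsilon>" "- inner lam (G y) \<le> \<epsilon>" "posinf_norm (G y) \<le> \<epsilon>"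
    using compl posinf_norm_nonneg[of "G y"] \<beta>(1) by (auto simp: \<epsilon>_def d_def)
  have G_y: "\<forall>i. G y $ i \<le> \<epsilon>" using posinf_norm_ge \<epsilon>(3) order_trans by blast
  have lower: "P y - \<epsilon> - \<beta>S * d * r + \<mu> / 2 * r\<^sup>2 \<le> P xb"
    unfolding d_def r_def P_def using \<epsilon>(2) xb(1) lam v Q L unfolding G_def
    by (intro inexact_solution_model_gap) (auto intro: order_trans[OF less_imp_le[OF L(1)]] resid)
  define K where "K = max (\<beta>C / Lmin) (max (16 * \<beta>S\<^sup>2 / \<mu>min\<^sup>2) (2 * \<beta>C / \<mu>min))"
  show ?thesis
  proof (cases "2 * \<epsilon> < Lmin * r\<^sup>2")
    case True
    have "convex_on UNIV P"
      unfolding P_def using Q \<mu> \<phi> by (intro convex_on_prox_model) auto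
    moreover have "2 * \<epsilon> < Lmin * (norm (xb - y))\<^sup>2"
      using True by (simp add: r_def norm_minus_commute)
    ultimately have "P xb \<le> P y"
      using constrained_minimizer_le_near_feasible L G_y[unfolded G_def] \<epsilon>(1) xb[unfolded G_def]
      by blast
    with lower have "\<mu> * r\<^sup>2 \<le> \<beta>C * d\<^sup>2 + 2 * \<beta>S * d * r" by (simp add: \<epsilon>_def algebra_simps)
    moreover have "\<mu>min * r\<^sup>2 \<le> \<mu> * r\<^sup>2" using \<mu> by (intro mult_right_mono) auto
    ultimately have "r\<^sup>2 \<le> max (16 * \<beta>S\<^sup>2 / \<mu>min\<^sup>2) (2 * \<beta>C / \<mu>min) * d\<^sup>2"
      using \<mu> \<beta> by (intro sq_le_of_quadratic_ineq) (auto simp: d_def r_def)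
    also have "\<dots> \<le> K * d\<^sup>2" unfolding K_def by (intro mult_right_mono) auto
    finally show ?thesis by (simp add: K_def r_def d_def)
  next
    case False
    then have "r\<^sup>2 \<le> \<beta>C / Lmin * d\<^sup>2" using L(1) by (simp add: \<epsilon>_def field_simps)
    also have "\<dots> \<le> K * d\<^sup>2" unfolding K_def by (intro mult_right_mono) auto
    finally show ?thesis by (simp add: K_def r_def d_def)
  qed
qed

lemma frechet_subdiff_convex_imp_subgradient:
  fixes \<phi> :: "'a::euclidean_space \<Rightarrow> real"
  assumes \<phi>: "convex_on UNIV \<phi>" and v: "v \<in> frechet_subdiff \<phi> y"
  shows "\<phi> y + inner v (z - y) \<le> \<phi> z"
proof (rule ccontr)
  define q where "q w = (\<phi> w - \<phi> y - inner v (w - y)) / norm (w - y)" for w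
  define c where "c = \<phi> y + inner v (z - y) - \<phi> z"
  define D where "D = norm (z - y)"
  assume "\<not> \<phi> y + inner v (z - y) \<le> \<phi> z"
  then have c: "0 < c" by (simp add: c_def)
  then have "z \<noteq> y" by (auto simp: c_def)
  then have D: "0 < D" by (simp add: D_def)
  have "\<forall>\<^sub>F w in at y. - c / D < q w"
  proof -
    have "\<forall>b<0. \<forall>\<^sub>F w in at y. b < ereal (q w)"
      using v by (simp add: frechet_subdiff_def le_Liminf_iff q_def)
    moreover have "ereal (- c / D) < 0" using c D by (simp add: divide_neg_pos)
    ultimately show ?thesis by fastforce
  qed
  moreover have "filterlim (\<lambda>s. y + s *\<^sub>R (z - y)) (at y) (at_right 0)"
  proof (rule filterlim_atI)
    show "((\<lambda>s. y + s *\<^sub>R (z - y)) \<longlongrightarrow> y) (at_right 0)"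
      by (auto intro!: tendsto_eq_intros)
    show "\<forall>\<^sub>F s in at_right 0. y + s *\<^sub>R (z - y) \<noteq> y"
      using \<open>z \<noteq> y\<close> by (auto simp: eventually_at_filter)
  qed
  ultimately have "\<forall>\<^sub>F s in at_right 0. - c / D < q (y + s *\<^sub>R (z - y))"
    by (rule eventually_compose_filterlim)
  moreover have "\<forall>\<^sub>F s in at_right (0::real). s < 1"
    by (simp add: eventually_at_right_field) (use zero_less_one in blast)
  moreover note eventually_at_right_less[of "0::real"]
  ultimately have "\<forall>\<^sub>F s in at_right 0. - c / D < q (y + s *\<^sub>R (z - y)) \<and> s < 1 \<and> 0 < s"
    by eventually_elim blast
  then obtain s where s: "- c / D < q (y + s *\<^sub>R (z - y))" "s < 1" "0 < s"
    using eventually_happens'[OF trivial_limit_at_right_real] by blast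
  have "\<phi> (y + s *\<^sub>R (z - y)) \<le> (1 - s) * \<phi> y + s * \<phi> z"
    using convex_onD[OF \<phi>, of s y z] s by (simp add: algebra_simps)
  then have "\<phi> (y + s *\<^sub>R (z - y)) - \<phi> y - s * inner v (z - y) \<le> - (s * c)"
    by (simp add: c_def algebra_simps)
  then have "(\<phi> (y + s *\<^sub>R (z - y)) - \<phi> y - s * inner v (z - y)) / (s * D) \<le> - (s * c) / (s * D)"
    using s D by (intro divide_right_mono) auto
  moreover have "q (y + s *\<^sub>R (z - y)) = (\<phi> (y + s *\<^sub>R (z - y)) - \<phi> y - s * inner v (z - y)) / (s * D)"
    using s by (simp add: q_def D_def)
  ultimately show False using s(1,3) by simp
qed

lemma limiting_subdiff_convex_imp_subgradient:
  fixes \<phi> :: "'a::euclidean_space \<Rightarrow> real"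
  assumes \<phi>: "convex_on UNIV \<phi>" and v: "v \<in> limiting_subdiff \<phi> y"
  shows "\<phi> y + inner v (z - y) \<le> \<phi> z"
proof -
  obtain xs vs where xs: "xs \<longlonglongrightarrow> y" "(\<lambda>k. \<phi> (xs k)) \<longlonglongrightarrow> \<phi> y"
      and vs: "\<forall>k. vs k \<in> frechet_subdiff \<phi> (xs k)" "vs \<longlonglongrightarrow> v"
    using v by (auto simp: limiting_subdiff_def)
  have "(\<lambda>k. \<phi> (xs k) + inner (vs k) (z - xs k)) \<longlonglongrightarrow> \<phi> y + inner v (z - y)"
    by (intro tendsto_intros xs vs)
  moreover have "\<forall>k. \<phi> (xs k) + inner (vs k) (z - xs k) \<le> \<phi> z"
    using frechet_subdiff_convex_imp_subgradient[OF \<phi>] vs(1) by blast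
  ultimately show ?thesis by (intro LIMSEQ_le_const2) auto
qed

lemma backtracking_keeps_lower_bounds:
  fixes \<mu> :: "nat \<Rightarrow> real" and L :: "nat \<Rightarrow> real^'m"
  assumes init: "\<mu>min \<le> \<mu> 0" "\<forall>i. Lmin \<le> L 0 $ i" and "0 \<le> \<mu>min" "0 \<le> Lmin" "1 \<le> \<tau>"
    and update: "\<forall>j<J. (L (Suc j) = \<tau> *\<^sub>R L j \<and> \<mu> (Suc j) = \<mu> j) \<or>
                        (L (Suc j) = L j \<and> \<mu> (Suc j) = \<tau> * \<mu> j)"
  shows "j \<le> J \<Longrightarrow> \<mu>min \<le> \<mu> j \<and> (\<forall>i. Lmin \<le> L j $ i)"
proof (induction j)
  case 0
  then show ?case using init by simp
next
  case (Suc j)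
  then have IH: "\<mu>min \<le> \<mu> j" "\<forall>i. Lmin \<le> L j $ i" and "j < J" by simp_all
  have le_scaled: "w \<le> \<tau> * w" if "0 \<le> w" for w
    using mult_right_mono[OF \<open>1 \<le> \<tau>\<close> that] by simp
  from update \<open>j < J\<close> consider
      "L (Suc j) = \<tau> *\<^sub>R L j" "\<mu> (Suc j) = \<mu> j"
    | "L (Suc j) = L j" "\<mu> (Suc j) = \<tau> * \<mu> j"
    by blast
  then show ?case
  proof cases
    case 1
    have "Lmin \<le> \<tau> * L j $ i" for i
      using IH(2) le_scaled[of "L j $ i"] \<open>0 \<le> Lmin\<close> by (meson order_trans)
    then show ?thesis using 1 IH by simp
  next
    case 2
    have "\<mu>min \<le> \<tau> * \<mu> j" using IH(1) le_scaled[of "\<mu> j"] \<open>0 \<le> \<mu>min\<close> by linarith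
    then show ?thesis using 2 IH by simp
  qed
qed

lemma sufficient_decrease_imp_steps_tendsto_zero:
  fixes f :: "nat \<Rightarrow> real" and x :: "nat \<Rightarrow> 'a::real_normed_vector"
  assumes c: "0 < c" and bdd: "\<forall>k. b \<le> f k"
    and decrease: "\<forall>k. f (Suc k) + c * (norm (x (Suc k) - x k))\<^sup>2 \<le> f k"
  shows "(\<lambda>k. x (Suc k) - x k) \<longlonglongrightarrow> 0"
proof -
  define s where "s k = (norm (x (Suc k) - x k))\<^sup>2" for k
  have partial: "(\<Sum>k<n. c * s k) \<le> f 0 - f n" for n
  proof (induction n)
    case (Suc n)
    then show ?case using decrease[rule_format, of n] by (simp add: s_def)
  qed simp
  have "summable (\<lambda>k. c * s k)"
  proof (rule summableI_nonneg_bounded)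
    show "0 \<le> c * s k" for k using c by (simp add: s_def)
    show "(\<Sum>k<n. c * s k) \<le> f 0 - b" for n using partial[of n] bdd by (meson diff_left_mono order_trans)
  qed
  then have "(\<lambda>k. inverse c * (c * s k)) \<longlonglongrightarrow> inverse c * 0"
    by (intro tendsto_intros summable_LIMSEQ_zero)
  then have "(\<lambda>k. sqrt (s k)) \<longlonglongrightarrow> sqrt 0" using c by (intro tendsto_intros) simp
  then show ?thesis by (simp add: s_def tendsto_norm_zero_iff)
qed

lemma dominated_by_vanishing_steps_tendsto_zero:
  fixes x z :: "nat \<Rightarrow> 'a::real_normed_vector"
  assumes steps: "(\<lambda>k. x (Suc k) - x k) \<longlonglongrightarrow> 0"
    and dominated: "\<And>k. (norm (x (Suc k) - z k))\<^sup>2 \<le> K * (norm (x (Suc k) - x k))\<^sup>2"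
  shows "(\<lambda>k. norm (x (Suc k) - z k)) \<longlonglongrightarrow> 0" and "(\<lambda>k. norm (x k - z k)) \<longlonglongrightarrow> 0"
proof -
  have step_norms: "(\<lambda>k. norm (x (Suc k) - x k)) \<longlonglongrightarrow> 0"
    using steps by (rule tendsto_norm_zero)
  show next_close: "(\<lambda>k. norm (x (Suc k) - z k)) \<longlonglongrightarrow> 0"
  proof (rule Lim_null_comparison)
    show "\<forall>\<^sub>F k in sequentially. norm (norm (x (Suc k) - z k)) \<le> sqrt K * norm (x (Suc k) - x k)"
    proof (intro always_eventually allI)
      fix k
      have "norm (x (Suc k) - z k) \<le> sqrt (K * (norm (x (Suc k) - x k))\<^sup>2)"
        using dominated by (rule real_le_rsqrt)
      then show "norm (norm (x (Suc k) - z k)) \<le> sqrt K * norm (x (Suc k) - x k)"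
        by (simp add: real_sqrt_mult)
    qed
    show "(\<lambda>k. sqrt K * norm (x (Suc k) - x k)) \<longlonglongrightarrow> 0"
      using step_norms by (rule tendsto_mult_right_zero)
  qed
  show "(\<lambda>k. norm (x k - z k)) \<longlonglongrightarrow> 0"
  proof (rule Lim_null_comparison)
    show "\<forall>\<^sub>F k in sequentially. norm (norm (x k - z k)) \<le> norm (x (Suc k) - x k) + norm (x (Suc k) - z k)"
    proof (intro always_eventually allI)
      fix k
      have "norm (x k - z k) \<le> norm (x k - x (Suc k)) + norm (x (Suc k) - z k)"
        using norm_triangle_ineq[of "x k - x (Suc k)" "x (Suc k) - z k"] by simp
      then show "norm (norm (x k - z k)) \<le> norm (x (Suc k) - x k) + norm (x (Suc k) - z k)"
        by (simp add: norm_minus_commute)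
    qed
    show "(\<lambda>k. norm (x (Suc k) - x k) + norm (x (Suc k) - z k)) \<longlonglongrightarrow> 0"
      using tendsto_add[OF step_norms next_close] by simp
  qed
qed

lemma cluster_points_eq_Inter_closure_tails:
  fixes x :: "nat \<Rightarrow> 'a::metric_space"
  shows "cluster_points x = (\<Inter>N. closure (x ` {N..}))"
proof (intro set_eqI iffI)
  fix z assume "z \<in> cluster_points x"
  then obtain r where r: "strict_mono r" "(x \<circ> r) \<longlonglongrightarrow> z" by (auto simp: cluster_points_def)
  have "\<exists>n\<ge>N. dist (x n) z < e" if "0 < e" for N e
  proof -
    obtain M where "\<forall>n\<ge>M. dist (x (r n)) z < e" using r(2) \<open>0 < e\<close> by (auto simp: lim_sequentially)
    moreover have "N \<le> r (max M N)" using seq_suble[OF r(1), of "max M N"] by simp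
    ultimately show ?thesis by (meson max.cobounded1)
  qed
  then show "z \<in> (\<Inter>N. closure (x ` {N..}))" by (auto simp: closure_approachable)
next
  fix z assume "z \<in> (\<Inter>N. closure (x ` {N..}))"
  then have near: "\<forall>N. \<forall>e>0. \<exists>n\<ge>N. dist (x n) z < e" by (auto simp: closure_approachable)
  have later: "\<exists>j. dist (x j) z < inverse (real (Suc n)) \<and> i < j" for n i
  proof -
    have "0 < inverse (real (Suc n))" by simp
    then obtain j where "Suc i \<le> j" "dist (x j) z < inverse (real (Suc n))" using near by blast
    then show ?thesis by (auto simp: Suc_le_eq)
  qed
  have "\<exists>r. \<forall>n. dist (x (r n)) z < inverse (real (Suc n)) \<and> r n < r (Suc n)"
    by (rule dependent_nat_choice) (use later in blast)+
  then obtain r where r: "\<forall>n. dist (x (r n)) z < inverse (real (Suc n)) \<and> r n < r (Suc n)" ..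
  have "(\<lambda>n. dist (x (r n)) z) \<longlonglongrightarrow> 0"
    using r by (intro Lim_null_comparison[OF _ LIMSEQ_inverse_real_of_nat] always_eventually) (auto intro: less_imp_le)
  then have "(x \<circ> r) \<longlonglongrightarrow> z" by (subst tendsto_dist_iff) (simp add: comp_def)
  then show "z \<in> cluster_points x" using r by (auto simp: cluster_points_def strict_mono_Suc_iff)
qed

lemma bounded_range_imp_cluster_points_nonempty_compact:
  fixes x :: "nat \<Rightarrow> 'a::heine_borel"
  assumes "bounded (range x)"
  shows "cluster_points x \<noteq> {} \<and> compact (cluster_points x)"
proof
  show "cluster_points x \<noteq> {}"
    using bounded_imp_convergent_subsequence[OF assms] by (auto simp: cluster_points_def)
  have "cluster_points x \<subseteq> closure (x ` {0..})"
    unfolding cluster_points_eq_Inter_closure_tails by blast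
  moreover have "bounded (closure (x ` {0..}))" using assms by (simp add: bounded_closure)
  ultimately have "bounded (cluster_points x)" by (rule bounded_subset[rotated])
  then show "compact (cluster_points x)"
    by (simp add: compact_eq_bounded_closed cluster_points_eq_Inter_closure_tails closed_INT)
qed

theorem lemma4p2:
  fixes g0 :: "'a::euclidean_space \<Rightarrow> real" and g :: "'a \<Rightarrow> real^'m" and \<phi> :: "'a \<Rightarrow> real"
    and Oset :: "'a set"
    and \<mu>min \<mu>max Lmin Lmax M \<beta>C \<beta>S \<alpha> \<tau> :: real
    and x :: "nat \<Rightarrow> 'a" and \<xi> :: "nat \<Rightarrow> 'a" and V :: "nat \<Rightarrow> 'a^'m"
    and \<mu> :: "nat \<Rightarrow> nat \<Rightarrow> real" and L :: "nat \<Rightarrow> nat \<Rightarrow> real^'m"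
    and Q :: "nat \<Rightarrow> nat \<Rightarrow> 'a \<Rightarrow> 'a"
    and y v :: "nat \<Rightarrow> nat \<Rightarrow> 'a" and lam :: "nat \<Rightarrow> nat \<Rightarrow> real^'m"
    and xbar :: "nat \<Rightarrow> nat \<Rightarrow> 'a" and jk :: "nat \<Rightarrow> nat"
  defines "\<Gamma> \<equiv> {z. g z \<in> nonpos_orth}"
    and "F \<equiv> iMBA_F g0 g \<phi>"
    and "Fkj \<equiv> \<lambda>k j z. g0 (x k) + inner (\<xi> k) (z - x k) + inner (z - x k) (Q k j (z - x k)) / 2 + \<phi> z"
    and "Gkj \<equiv> \<lambda>k j. Gmap g (x k) (V k) (L k j)"
  assumes
    \<comment> \<open>Assumption 1\<close>
    O_open: "open Oset" and O_convex: "convex Oset" and Gamma_sub: "\<Gamma> \<subseteq> Oset" and Gamma_ne: "\<Gamma> \<noteq> {}"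
    and g0_reg: "\<forall>z\<in>Oset. locally_lipschitz_at g0 z \<and> upper_C2_at TYPE('c::topological_space) g0 z"
    and g_reg: "\<forall>i z. locally_lipschitz_at (\<lambda>w. g w $ i) z \<and> upper_C2_at TYPE('c) (\<lambda>w. g w $ i) z"
    and phi_convex: "convex_on UNIV \<phi>"
    and F_bdd: "\<exists>c. \<forall>z\<in>\<Gamma>. F z \<ge> ereal c"
    \<comment> \<open>parameters and initial point\<close>
    and params: "0 < \<mu>min" "\<mu>min \<le> \<mu>max" "0 < Lmin" "Lmin \<le> Lmax" "M > 0" "\<beta>C > 0" "\<beta>S > 0"
                "\<alpha> > 0" "\<tau> > 1"
    and x0: "x 0 \<in> \<Gamma>"
    \<comment> \<open>Algorithm iMBA\<close>
    and subgr: "\<forall>k. \<xi> k \<in> limiting_subdiff g0 (x k) \<and> V k \<in> jac_subdiff g (x k)"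
    and init: "\<forall>k. \<mu> k 0 \<in> {\<mu>min..\<mu>max} \<and> (\<forall>i. L k 0 $ i \<in> {Lmin..Lmax})"
    and Q_prop: "\<forall>k j. j \<le> jk k \<longrightarrow> linear (Q k j) \<and>
                   (\<forall>u w. inner (Q k j u) w = inner u (Q k j w)) \<and>
                   (\<forall>u. \<mu> k j * (norm u)\<^sup>2 \<le> inner u (Q k j u) \<and>
                        inner u (Q k j u) \<le> (\<mu> k j + M) * (norm u)\<^sup>2)"
    and xbar_min: "\<forall>k j. j \<le> jk k \<longrightarrow> Gkj k j (xbar k j) \<in> nonpos_orth \<and>
                   (\<forall>z. Gkj k j z \<in> nonpos_orth \<longrightarrow> Fkj k j (xbar k j) \<le> Fkj k j z)"
    and inexact: "\<forall>k j. j \<le> jk k \<longrightarrow>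
                   Fkj k j (y k j) \<le> Fkj k j (x k) \<and>
                   v k j \<in> limiting_subdiff \<phi> (y k j) \<and>
                   (\<forall>i. lam k j $ i \<ge> 0) \<and>
                   max (- inner (lam k j) (Gkj k j (y k j))) 0 + posinf_norm (Gkj k j (y k j))
                      \<le> \<beta>C / 2 * (norm (y k j - x k))\<^sup>2 \<and>
                   norm (\<xi> k + Q k j (y k j - x k) + v k j + (\<Sum>i\<in>UNIV. lam k j $ i *\<^sub>R V k $ i)
                         + inner (L k j) (lam k j) *\<^sub>R (y k j - x k))
                      \<le> \<beta>S * norm (y k j - x k)"
    and reject: "\<forall>k j. j < jk k \<longrightarrow>
                   \<not> (g (y k j) \<in> nonpos_orth \<and>
                       F (y k j) \<le> F (x k) - ereal (\<alpha> / 2 * (norm (y k j - x k))\<^sup>2)) \<and>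
                   (g (y k j) \<notin> nonpos_orth \<longrightarrow> L k (Suc j) = \<tau> *\<^sub>R L k j \<and> \<mu> k (Suc j) = \<mu> k j) \<and>
                   (g (y k j) \<in> nonpos_orth \<longrightarrow> L k (Suc j) = L k j \<and> \<mu> k (Suc j) = \<tau> * \<mu> k j)"
    and accept: "\<forall>k. g (y k (jk k)) \<in> nonpos_orth \<and>
                   F (y k (jk k)) \<le> F (x k) - ereal (\<alpha> / 2 * (norm (y k (jk k) - x k))\<^sup>2)"
    and next_iter: "\<forall>k. x (Suc k) = y k (jk k)"
    \<comment> \<open>Assumption 2\<close>
    and A2: "\<forall>k j. j \<le> jk k \<longrightarrow>
               metric_subregular (\<lambda>z. {Gkj k j z - w | w. w \<in> nonpos_orth}) (xbar k j) 0"
    \<comment> \<open>Assumption 3\<close>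
    and A3: "bounded (range x)"
  shows "cluster_points x \<noteq> {} \<and> compact (cluster_points x) \<and>
         (\<lambda>k. norm (x k - xbar k (jk k))) \<longlonglongrightarrow> 0 \<and>
         (\<lambda>k. norm (x (Suc k) - xbar k (jk k))) \<longlonglongrightarrow> 0"
proof -
  define K where "K = max (\<beta>C / Lmin) (max (16 * \<beta>S\<^sup>2 / \<mu>min\<^sup>2) (2 * \<beta>C / \<mu>min))"
  have step_near_minimizer: "(norm (x (Suc k) - xbar k (jk k)))\<^sup>2 \<le> K * (norm (x (Suc k) - x k))\<^sup>2" for k
  proof -
    let ?j = "jk k"
    have bounds: "\<mu>min \<le> \<mu> k ?j \<and> (\<forall>i. Lmin \<le> L k ?j $ i)"
    proof (rule backtracking_keeps_lower_bounds[where J = "jk k"])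
      show "\<forall>j<jk k. (L k (Suc j) = \<tau> *\<^sub>R L k j \<and> \<mu> k (Suc j) = \<mu> k j) \<or>
                     (L k (Suc j) = L k j \<and> \<mu> k (Suc j) = \<tau> * \<mu> k j)"
        using reject by blast
    qed (use init params in auto)
    have Q: "coercive_selfadjoint (\<mu> k ?j) (Q k ?j)"
      using Q_prop by (simp add: coercive_selfadjoint_def)
    have model: "Fkj k ?j = prox_model (g0 (x k)) (x k) (\<xi> k) (Q k ?j) \<phi>"
      by (simp add: Fkj_def prox_model_def fun_eq_iff)
    have xb: "Gkj k ?j (xbar k ?j) \<in> nonpos_orth"
      "\<forall>z. Gkj k ?j z \<in> nonpos_orth \<longrightarrow> Fkj k ?j (xbar k ?j) \<le> Fkj k ?j z"
      using xbar_min by simp_all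
    have y: "v k ?j \<in> limiting_subdiff \<phi> (y k ?j)" "\<forall>i. 0 \<le> lam k ?j $ i"
      "max (- inner (lam k ?j) (Gkj k ?j (y k ?j))) 0 + posinf_norm (Gkj k ?j (y k ?j))
         \<le> \<beta>C / 2 * (norm (y k ?j - x k))\<^sup>2"
      "norm (model_kkt_residual (x k) (\<xi> k) (Q k ?j) (V k) (L k ?j) (lam k ?j) (v k ?j) (y k ?j))
         \<le> \<beta>S * norm (y k ?j - x k)"
      using inexact by (simp_all add: model_kkt_residual_def)
    have "\<forall>z. \<phi> (y k ?j) + inner (v k ?j) (z - y k ?j) \<le> \<phi> z"
      using limiting_subdiff_convex_imp_subgradient[OF phi_convex y(1)] by blast
    from inexact_solution_near_minimizer[OF Q params(1) _ params(3) _ _ _ phi_convex this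
        xb[unfolded Gkj_def model] y(2) y(3)[unfolded Gkj_def] y(4)] bounds params
    show ?thesis using next_iter by (simp add: K_def)
  qed
  have feasible: "g (x k) \<in> nonpos_orth" for k
    using x0 accept next_iter by (cases k) (simp_all add: \<Gamma>_def)
  define f where "f k = g0 (x k) + \<phi> (x k)" for k
  have F_x: "F (x k) = ereal (f k)" for k using feasible by (simp add: F_def iMBA_F_def f_def)
  obtain b where "\<forall>k. b \<le> f k" using F_bdd feasible F_x by (fastforce simp: \<Gamma>_def)
  moreover have "\<forall>k. f (Suc k) + \<alpha> / 2 * (norm (x (Suc k) - x k))\<^sup>2 \<le> f k"
  proof
    fix k
    have "F (x (Suc k)) \<le> F (x k) - ereal (\<alpha> / 2 * (norm (x (Suc k) - x k))\<^sup>2)"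
      using accept[rule_format, of k] unfolding next_iter[rule_format, of k, symmetric] by simp
    then show "f (Suc k) + \<alpha> / 2 * (norm (x (Suc k) - x k))\<^sup>2 \<le> f k" by (simp add: F_x)
  qed
  ultimately have steps: "(\<lambda>k. x (Suc k) - x k) \<longlonglongrightarrow> 0"
    using params(8) by (intro sufficient_decrease_imp_steps_tendsto_zero[where c = "\<alpha> / 2"]) auto
  then show ?thesis
    using dominated_by_vanishing_steps_tendsto_zero[where z = "\<lambda>k. xbar k (jk k)", OF _ step_near_minimizer]
      bounded_range_imp_cluster_points_nonempty_compact[OF A3] by blast
qed

end
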